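(* Let $n \geq 3$, let $\Omega = \bigcap_{m=0}^q \{u_m \leq 0\} \subset \mathbb{R}^n$ be a compact convex polytope with non-empty interior, and let $g$ be a Riemannian metric on $\mathbb{R}^n$, all satisfying the standing assumptions described in the context. Then for every $\varepsilon \in (0,1)$ there exists $\delta > 0$ with the following property: if $0 \leq j < k \leq q$ and $x \in \Omega$ satisfies $-\delta \leq u_j(x) \leq 0$ and $-\delta \leq u_k(x) \leq 0$, then $\langle \nu_j, \nu_k \rangle - \varepsilon \leq \langle N_j, N_k \rangle$ at $x$.
   Context: $u_0,\dots,u_q$ are non-constant linear (affine) functions on $\mathbb{R}^n$, $\Omega=\bigcap_{m=0}^q\{u_m\le0\}$ compact convex with non-empty interior. Standing assumptions: (a) for each $k$, $\{u_k>0\}\cap\bigcap_{m\neq k}\{u_m\le0\}\neq\emptyset$; (b) the Euclidean gradient of each $u_k$ is a unit vector $N_k\in S^{n-1}$; (c) for $j<k$, if some $x\in\Omega$ has $u_j(x)=u_k(x)=0$ then $\langle N_j,N_k\rangle\le0$ (Euclidean); (d) $\nu_k=\nabla u_k/|\nabla u_k|$ is the unit normal to level sets of $u_k$ computed with respect to $g$, and for $j<k$, if $x\in\Omega$ with $u_j(x)=u_k(x)=0$, then $\langle\nu_j,\nu_k\rangle\le\langle N_j,N_k\rangle$ at $x$, where $\langle\nu_j,\nu_k\rangle$ is the $g$-inner product and $\langle N_j,N_k\rangle$ the Euclidean one. *)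

theory Defs
  imports "HOL-Analysis.Analysis"
begin

fun Ck :: "nat \<Rightarrow> (real^'n \<Rightarrow> real) \<Rightarrow> bool" where
  "Ck 0 f = continuous_on UNIV f"
| "Ck (Suc k) f = (\<exists>D :: real^'n \<Rightarrow> real^'n.
      (\<forall>x. (f has_derivative (\<lambda>h. D x \<bullet> h)) (at x)) \<and> (\<forall>i. Ck k (\<lambda>x. D x $ i)))"

definition smooth_fun :: "(real^'n \<Rightarrow> real) \<Rightarrow> bool" where
  "smooth_fun f \<longleftrightarrow> (\<forall>k. Ck k f)"

definition riemannian_metric :: "(real^'n \<Rightarrow> real^'n^'n) \<Rightarrow> bool" where
  "riemannian_metric g \<longleftrightarrow>
     (\<forall>i j. smooth_fun (\<lambda>x. g x $ i $ j)) \<and>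
     (\<forall>x. transpose (g x) = g x) \<and>
     (\<forall>x v. v \<noteq> 0 \<longrightarrow> v \<bullet> (g x *v v) > 0)"

definition ginner :: "(real^'n \<Rightarrow> real^'n^'n) \<Rightarrow> real^'n \<Rightarrow> real^'n \<Rightarrow> real^'n \<Rightarrow> real" where
  "ginner g x v w = v \<bullet> (g x *v w)"

text \<open>g-gradient at x of an affine function with Euclidean gradient N: g(x)^{-1} N.\<close>
definition ggrad :: "(real^'n \<Rightarrow> real^'n^'n) \<Rightarrow> real^'n \<Rightarrow> real^'n \<Rightarrow> real^'n" where
  "ggrad g x N = matrix_inv (g x) *v N"

text \<open>Unit normal nu = grad_g u / |grad_g u|_g to the level sets, w.r.t. g.\<close>
definition gnormal :: "(real^'n \<Rightarrow> real^'n^'n) \<Rightarrow> real^'n \<Rightarrow> real^'n \<Rightarrow> real^'n" where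
  "gnormal g x N = (1 / sqrt (ginner g x (ggrad g x N) (ggrad g x N))) *\<^sub>R ggrad g x N"

end

theory Submission
  imports Defs
begin

text \<open>Both sides of the inequality are continuous in \<open>x\<close>: the Euclidean side is constant, and
  \<open>\<langle>\<nu>\<^sub>j, \<nu>\<^sub>k\<rangle>\<close> is continuous because the entries of \<open>g\<close> are, hence so is \<open>g\<^sup>-\<^sup>1 N\<close> by Cramer's
  rule, and the normalisation divides by a positive continuous function. Hypothesis (d) says that
  \<open>\<langle>\<nu>\<^sub>j, \<nu>\<^sub>k\<rangle> - \<langle>N\<^sub>j, N\<^sub>k\<rangle> \<le> 0\<close> on the face \<open>\<Omega> \<inter> {u\<^sub>j = u\<^sub>k = 0}\<close>; by compactness of \<open>\<Omega>\<close> this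
  difference stays below \<open>\<epsilon>\<close> on a uniform neighbourhood \<open>{|u\<^sub>j|, |u\<^sub>k| \<le> \<delta>}\<close> of the face, and
  there are only finitely many pairs \<open>(j, k)\<close>.\<close>

lemma compact_eventually_near_zeros:
  fixes F :: "'a::metric_space \<Rightarrow> real" and h :: "'a \<Rightarrow> 'b::real_normed_vector"
  assumes "compact S" "continuous_on S F" "continuous_on S h"
    and zeros: "\<forall>x\<in>S. h x = 0 \<longrightarrow> F x < e"
  shows "\<forall>\<^sub>F d in at_right 0. \<forall>x\<in>S. norm (h x) \<le> d \<longrightarrow> F x < e"
proof -
  define K where "K = S \<inter> F -` {e..}"
  have "closed K"
    unfolding K_def
    using continuous_closed_preimage[OF assms(2) compact_imp_closed[OF assms(1)] closed_atLeast] .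
  then have "compact K"
    using compact_Int_closed[OF \<open>compact S\<close>, of K] by (simp add: K_def Int_absorb1)
  show ?thesis
  proof (cases "K = {}")
    case True
    then have "\<forall>x\<in>S. F x < e"
      by (auto simp: K_def not_le)
    then show ?thesis
      by simp
  next
    case False
    have "continuous_on K (\<lambda>x. norm (h x))"
      unfolding K_def by (intro continuous_intros continuous_on_subset[OF assms(3)]) auto
    then obtain y where "y \<in> K" and y_min: "\<And>x. x \<in> K \<Longrightarrow> norm (h y) \<le> norm (h x)"
      using continuous_attains_inf[OF \<open>compact K\<close> False] by blast
    then have "h y \<noteq> 0"
      using zeros by (auto simp: K_def)
    then have "\<forall>\<^sub>F d in at_right 0. d < norm (h y)"
      unfolding eventually_at_right_field by (intro exI[of _ "norm (h y)"]) auto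
    then show ?thesis
      by eventually_elim (use y_min in \<open>force simp: K_def not_less\<close>)
  qed
qed

lemma continuous_on_det:
  fixes A :: "'a::topological_space \<Rightarrow> real^'n^'n"
  assumes "\<And>i j. continuous_on S (\<lambda>x. A x $ i $ j)"
  shows "continuous_on S (\<lambda>x. det (A x))"
  unfolding det_def by (intro continuous_intros assms)

lemma continuous_on_inner_matrix_vector_mult:
  fixes A :: "'a::topological_space \<Rightarrow> real^'n^'n"
  assumes "\<And>i j. continuous_on S (\<lambda>x. A x $ i $ j)"
    and "continuous_on S v" "continuous_on S w"
  shows "continuous_on S (\<lambda>x. v x \<bullet> (A x *v w x))"
  unfolding inner_vec_def matrix_vector_mult_def
  by (simp, intro continuous_intros assms)

lemma riemannian_metric_continuous_entry:
  "riemannian_metric g \<Longrightarrow> continuous_on UNIV (\<lambda>x. g x $ i $ j)"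
  unfolding riemannian_metric_def smooth_fun_def by (metis Ck.simps(1))

lemma ginner_self_pos:
  "riemannian_metric g \<Longrightarrow> v \<noteq> 0 \<Longrightarrow> ginner g x v v > 0"
  unfolding riemannian_metric_def ginner_def by blast

lemma riemannian_metric_invertible:
  assumes "riemannian_metric g"
  shows "invertible (g x)"
proof -
  have "g x *v v = 0 \<Longrightarrow> v = 0" for v
    using ginner_self_pos[OF assms, of v x] by (auto simp: ginner_def)
  then show ?thesis
    using invertible_left_inverse matrix_left_invertible_ker by blast
qed

lemma riemannian_metric_mult_ggrad:
  assumes "riemannian_metric g"
  shows "g x *v ggrad g x N = N"
proof -
  have "g x ** matrix_inv (g x) = mat 1"
    using riemannian_metric_invertible[OF assms]
    unfolding invertible_def matrix_inv_def by (rule someI_ex[THEN conjunct1])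
  then show ?thesis
    unfolding ggrad_def by (metis matrix_vector_mul_assoc matrix_vector_mul_lid)
qed

lemma ggrad_nonzero:
  "riemannian_metric g \<Longrightarrow> N \<noteq> 0 \<Longrightarrow> ggrad g x N \<noteq> 0"
  using riemannian_metric_mult_ggrad[of g x N] by auto

lemma continuous_on_ggrad:
  assumes "riemannian_metric g"
  shows "continuous_on UNIV (\<lambda>x. ggrad g x N)"
proof -
  note entry = riemannian_metric_continuous_entry[OF assms]
  have det_nonzero: "det (g x) \<noteq> 0" for x
    using riemannian_metric_invertible[OF assms] invertible_det_nz by blast
  have cramer_ggrad:
    "ggrad g x N = (\<chi> k. det (\<chi> i j. if j = k then N $ i else g x $ i $ j) / det (g x))" for x
    using cramer[OF det_nonzero] riemannian_metric_mult_ggrad[OF assms] by blast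
  have "continuous_on UNIV (\<lambda>x. (\<chi> i j. if j = k then N $ i else g x $ i $ j) $ i $ j)"
    for k i j
    by (cases "j = k") (auto intro: entry)
  then show ?thesis
    unfolding cramer_ggrad
    by (intro continuous_on_vec_lambda continuous_on_divide continuous_on_det entry)
      (simp_all add: det_nonzero)
qed

lemma continuous_on_gnormal:
  assumes "riemannian_metric g" "N \<noteq> 0"
  shows "continuous_on UNIV (\<lambda>x. gnormal g x N)"
proof -
  have "continuous_on UNIV (\<lambda>x. ginner g x (ggrad g x N) (ggrad g x N))"
    unfolding ginner_def
    by (intro continuous_on_inner_matrix_vector_mult riemannian_metric_continuous_entry
        continuous_on_ggrad assms(1))
  moreover have "ginner g x (ggrad g x N) (ggrad g x N) \<noteq> 0" for x
    using ginner_self_pos ggrad_nonzero assms by (metis less_irrefl)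
  ultimately show ?thesis
    unfolding gnormal_def
    by (intro continuous_intros continuous_on_ggrad assms(1)) simp_all
qed

lemma continuous_on_ginner_gnormal:
  assumes "riemannian_metric g" "N \<noteq> 0" "M \<noteq> 0"
  shows "continuous_on UNIV (\<lambda>x. ginner g x (gnormal g x N) (gnormal g x M))"
  unfolding ginner_def
  by (intro continuous_on_inner_matrix_vector_mult riemannian_metric_continuous_entry
      continuous_on_gnormal assms)

lemma eventually_ginner_gnormal_near_common_zeros:
  fixes f h :: "real^'n \<Rightarrow> real"
  assumes "riemannian_metric g" "N \<noteq> 0" "M \<noteq> 0" "compact S"
    and "continuous_on S f" "continuous_on S h"
    and zeros: "\<forall>x\<in>S. f x = 0 \<and> h x = 0 \<longrightarrow> ginner g x (gnormal g x N) (gnormal g x M) \<le> N \<bullet> M"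
    and "\<epsilon> > 0"
  shows "\<forall>\<^sub>F \<delta> in at_right 0. \<forall>x\<in>S. \<bar>f x\<bar> \<le> \<delta> \<and> \<bar>h x\<bar> \<le> \<delta> \<longrightarrow>
           ginner g x (gnormal g x N) (gnormal g x M) - \<epsilon> \<le> N \<bullet> M"
proof -
  have "\<forall>\<^sub>F \<delta> in at_right 0. \<forall>x\<in>S. norm (max \<bar>f x\<bar> \<bar>h x\<bar>) \<le> \<delta> \<longrightarrow>
          ginner g x (gnormal g x N) (gnormal g x M) - N \<bullet> M < \<epsilon>"
  proof (rule compact_eventually_near_zeros)
    show "continuous_on S (\<lambda>x. ginner g x (gnormal g x N) (gnormal g x M) - N \<bullet> M)"
      by (intro continuous_intros continuous_on_subset[OF continuous_on_ginner_gnormal] assms)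
        simp
  qed (use assms in \<open>auto intro!: continuous_intros\<close>)
  then show ?thesis
    by eventually_elim auto
qed

theorem lemma4p2:
  fixes u :: "nat \<Rightarrow> real^'n \<Rightarrow> real"
    and N :: "nat \<Rightarrow> real^'n"
    and c :: "nat \<Rightarrow> real"
    and q :: nat
    and g :: "real^'n \<Rightarrow> real^'n^'n"
    and \<Omega> :: "(real^'n) set"
  assumes dim: "CARD('n) \<ge> 3"
    and affine_u: "\<forall>k\<le>q. \<forall>x. u k x = N k \<bullet> x + c k"
    and unit_N: "\<forall>k\<le>q. norm (N k) = 1"
    and Omega_def: "\<Omega> = {x. \<forall>m\<le>q. u m x \<le> 0}"
    and compact: "compact \<Omega>"
    and convex: "convex \<Omega>"
    and interior: "interior \<Omega> \<noteq> {}"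
    and metric: "riemannian_metric g"
    and a: "\<forall>k\<le>q. \<exists>x. u k x > 0 \<and> (\<forall>m\<le>q. m \<noteq> k \<longrightarrow> u m x \<le> 0)"
    and c_cond: "\<forall>j k x. j < k \<and> k \<le> q \<and> x \<in> \<Omega> \<and> u j x = 0 \<and> u k x = 0
                   \<longrightarrow> N j \<bullet> N k \<le> 0"
    and d_cond: "\<forall>j k x. j < k \<and> k \<le> q \<and> x \<in> \<Omega> \<and> u j x = 0 \<and> u k x = 0
                   \<longrightarrow> ginner g x (gnormal g x (N j)) (gnormal g x (N k)) \<le> N j \<bullet> N k"
  shows "\<forall>\<epsilon>. 0 < \<epsilon> \<and> \<epsilon> < 1 \<longrightarrow> (\<exists>\<delta>>0. \<forall>j k x.
           j < k \<and> k \<le> q \<and> x \<in> \<Omega> \<and>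
           -\<delta> \<le> u j x \<and> u j x \<le> 0 \<and> -\<delta> \<le> u k x \<and> u k x \<le> 0
           \<longrightarrow> ginner g x (gnormal g x (N j)) (gnormal g x (N k)) - \<epsilon> \<le> N j \<bullet> N k)"
proof (intro allI impI)
  fix \<epsilon> :: real assume "0 < \<epsilon> \<and> \<epsilon> < 1"
  define pairs where "pairs = {(j, k). j < k \<and> k \<le> q}"
  have "finite pairs"
    by (rule finite_subset[of _ "{..q} \<times> {..q}"]) (auto simp: pairs_def)
  have "\<forall>\<^sub>F \<delta> in at_right 0. \<forall>x\<in>\<Omega>. \<bar>u j x\<bar> \<le> \<delta> \<and> \<bar>u k x\<bar> \<le> \<delta> \<longrightarrow>
          ginner g x (gnormal g x (N j)) (gnormal g x (N k)) - \<epsilon> \<le> N j \<bullet> N k"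
    if "(j, k) \<in> pairs" for j k
  proof (rule eventually_ginner_gnormal_near_common_zeros[OF metric _ _ compact])
    have "j \<le> q" "k \<le> q" using that by (auto simp: pairs_def)
    then show "N j \<noteq> 0" "N k \<noteq> 0" "continuous_on \<Omega> (u j)" "continuous_on \<Omega> (u k)"
      using unit_N affine_u by (auto intro!: continuous_intros)
  qed (use that d_cond \<open>0 < \<epsilon> \<and> \<epsilon> < 1\<close> in \<open>auto simp: pairs_def\<close>)
  then have "\<forall>\<^sub>F \<delta> in at_right 0. 0 < \<delta> \<and> (\<forall>(j, k)\<in>pairs. \<forall>x\<in>\<Omega>.
               \<bar>u j x\<bar> \<le> \<delta> \<and> \<bar>u k x\<bar> \<le> \<delta> \<longrightarrow>
               ginner g x (gnormal g x (N j)) (gnormal g x (N k)) - \<epsilon> \<le> N j \<bullet> N k)"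
    by (intro eventually_conj eventually_at_right_less eventually_ball_finite \<open>finite pairs\<close>) auto
  then obtain \<delta> where "0 < \<delta>" and \<delta>: "\<forall>(j, k)\<in>pairs. \<forall>x\<in>\<Omega>.
               \<bar>u j x\<bar> \<le> \<delta> \<and> \<bar>u k x\<bar> \<le> \<delta> \<longrightarrow>
               ginner g x (gnormal g x (N j)) (gnormal g x (N k)) - \<epsilon> \<le> N j \<bullet> N k"
    using eventually_happens' trivial_limit_at_right_real by blast
  then show "\<exists>\<delta>>0. \<forall>j k x. j < k \<and> k \<le> q \<and> x \<in> \<Omega> \<and>
           -\<delta> \<le> u j x \<and> u j x \<le> 0 \<and> -\<delta> \<le> u k x \<and> u k x \<le> 0
           \<longrightarrow> ginner g x (gnormal g x (N j)) (gnormal g x (N k)) - \<epsilon> \<le> N j \<bullet> N k"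
    by (force simp: pairs_def)
qed

end
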